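(* For every finite tuple $(b_1,\dots,b_k)$ of elements of $\mathbb{S}$ there is $g\in\mathrm{Aut}(\mathbb{S})$ such that the set of columns meeting $\{b_1,\dots,b_k\}$ and the set of columns meeting $\{g(b_1),\dots,g(b_k)\}$ are disjoint.
   Context: Directed graphs are simple and loopless ($x\to y$ denotes a directed edge, at most one direction between two distinct vertices). $\mathcal{S}$ is the class of finite such graphs in which $x\perp y:\Leftrightarrow\neg(x\to y\vee y\to x)$ is an equivalence relation (its classes are called columns) and satisfying the parity condition: for $x_1\neq x_2$, $y_1\neq y_2$ with $x_1\perp x_2$, $y_1\perp y_2$, the number of directed edges from $\{x_1,x_2\}$ to $\{y_1,y_2\}$ is even. $\mathbb{S}$ (the semigeneric directed graph) is the Fraïssé limit of $\mathcal{S}$, i.e. the countable homogeneous directed graph whose finite induced substructures are exactly the members of $\mathcal{S}$ up to isomorphism. *)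

theory Defs
  imports Main "HOL-Library.Countable_Set"
begin

definition perp :: "('a \<Rightarrow> 'a \<Rightarrow> bool) \<Rightarrow> 'a \<Rightarrow> 'a \<Rightarrow> bool" where
  "perp E x y \<longleftrightarrow> \<not> (E x y \<or> E y x)"

definition simple_digraph_on :: "'a set \<Rightarrow> ('a \<Rightarrow> 'a \<Rightarrow> bool) \<Rightarrow> bool" where
  "simple_digraph_on A E \<longleftrightarrow>
     (\<forall>x\<in>A. \<not> E x x) \<and> (\<forall>x\<in>A. \<forall>y\<in>A. \<not> (E x y \<and> E y x))"

definition in_class_S :: "'a set \<Rightarrow> ('a \<Rightarrow> 'a \<Rightarrow> bool) \<Rightarrow> bool" where
  "in_class_S A E \<longleftrightarrow>
     finite A \<and> simple_digraph_on A E \<and>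
     (\<forall>x\<in>A. perp E x x) \<and>
     (\<forall>x\<in>A. \<forall>y\<in>A. perp E x y \<longrightarrow> perp E y x) \<and>
     (\<forall>x\<in>A. \<forall>y\<in>A. \<forall>z\<in>A. perp E x y \<longrightarrow> perp E y z \<longrightarrow> perp E x z) \<and>
     (\<forall>x1\<in>A. \<forall>x2\<in>A. \<forall>y1\<in>A. \<forall>y2\<in>A.
        x1 \<noteq> x2 \<longrightarrow> y1 \<noteq> y2 \<longrightarrow> perp E x1 x2 \<longrightarrow> perp E y1 y2 \<longrightarrow>
        even (card {(x, y). x \<in> {x1, x2} \<and> y \<in> {y1, y2} \<and> E x y}))"

definition is_aut :: "('a \<Rightarrow> 'a \<Rightarrow> bool) \<Rightarrow> ('a \<Rightarrow> 'a) \<Rightarrow> bool" where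
  "is_aut E g \<longleftrightarrow> bij g \<and> (\<forall>x y. E x y \<longleftrightarrow> E (g x) (g y))"

definition homogeneous :: "('a \<Rightarrow> 'a \<Rightarrow> bool) \<Rightarrow> bool" where
  "homogeneous E \<longleftrightarrow>
     (\<forall>A B f. finite A \<longrightarrow> bij_betw f A B \<longrightarrow>
        (\<forall>x\<in>A. \<forall>y\<in>A. E x y \<longleftrightarrow> E (f x) (f y)) \<longrightarrow>
        (\<exists>g. is_aut E g \<and> (\<forall>x\<in>A. g x = f x)))"

text \<open>The age of (UNIV, E) is exactly S up to isomorphism: every finite induced
  substructure lies in S, and every member of S (represented on {..<n}) embeds
  as an induced substructure.\<close>

definition age_is_S :: "('a \<Rightarrow> 'a \<Rightarrow> bool) \<Rightarrow> bool" where
  "age_is_S E \<longleftrightarrow>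
     (\<forall>A. finite A \<longrightarrow> in_class_S A E) \<and>
     (\<forall>(n::nat) (R :: nat \<Rightarrow> nat \<Rightarrow> bool). in_class_S {..<n} R \<longrightarrow>
        (\<exists>f. inj_on f {..<n} \<and>
             (\<forall>i<n. \<forall>j<n. R i j \<longleftrightarrow> E (f i) (f j))))"

text \<open>The semigeneric directed graph: the countable homogeneous digraph whose
  age is S (the Fraisse limit of S, unique up to isomorphism).\<close>

definition semigeneric :: "('a \<Rightarrow> 'a \<Rightarrow> bool) \<Rightarrow> bool" where
  "semigeneric E \<longleftrightarrow> countable (UNIV :: 'a set) \<and> homogeneous E \<and> age_is_S E"

definition column :: "('a \<Rightarrow> 'a \<Rightarrow> bool) \<Rightarrow> 'a \<Rightarrow> 'a set" where
  "column E x = {y. perp E x y}"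

definition columns :: "('a \<Rightarrow> 'a \<Rightarrow> bool) \<Rightarrow> 'a set set" where
  "columns E = range (column E)"

definition columns_meeting :: "('a \<Rightarrow> 'a \<Rightarrow> bool) \<Rightarrow> 'a set \<Rightarrow> 'a set set" where
  "columns_meeting E B = {C \<in> columns E. C \<inter> B \<noteq> {}}"

end

theory Submission
  imports Defs
begin

text \<open>Let B be the finite set of entries. Two copies of B with every edge directed from the
  first copy to the second form a member of S, so they embed into \<open>\<SS>\<close>; homogeneity gives
  automorphisms \<open>g\<^sub>1, g\<^sub>2\<close> carrying B onto the two copies, and \<open>g = g\<^sub>1\<inverse> \<circ> g\<^sub>2\<close> satisfies
  \<open>b \<rightarrow> g b'\<close> for all \<open>b, b' \<in> B\<close>. Since \<open>\<perp>\<close> is transitive, no column can contain both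
  some b and some g b'.\<close>

lemma in_class_S_perp_trans:
  assumes "in_class_S A E" "x \<in> A" "y \<in> A" "z \<in> A" "perp E x y" "perp E y z"
  shows "perp E x z"
  using assms unfolding in_class_S_def by blast

lemma in_class_S_parityD:
  assumes "in_class_S A E" "x1 \<in> A" "x2 \<in> A" "y1 \<in> A" "y2 \<in> A" "x1 \<noteq> x2" "y1 \<noteq> y2"
    "perp E x1 x2" "perp E y1 y2"
  shows "even (card {(x, y). x \<in> {x1, x2} \<and> y \<in> {y1, y2} \<and> E x y})"
  using assms unfolding in_class_S_def by blast

lemma in_class_S_pullback:
  assumes inj: "inj_on f A"
    and edges: "\<And>x y. x \<in> A \<Longrightarrow> y \<in> A \<Longrightarrow> R x y \<longleftrightarrow> E (f x) (f y)"
    and cls: "in_class_S (f ` A) E"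
  shows "in_class_S A R"
proof -
  have perp_iff: "perp R x y \<longleftrightarrow> perp E (f x) (f y)" if "x \<in> A" "y \<in> A" for x y
    using edges that unfolding perp_def by blast
  have card_eq: "card {(x, y). x \<in> {x1, x2} \<and> y \<in> {y1, y2} \<and> R x y}
      = card {(x, y). x \<in> {f x1, f x2} \<and> y \<in> {f y1, f y2} \<and> E x y}"
    if "x1 \<in> A" "x2 \<in> A" "y1 \<in> A" "y2 \<in> A" for x1 x2 y1 y2
  proof -
    let ?S = "{(x, y). x \<in> {x1, x2} \<and> y \<in> {y1, y2} \<and> R x y}"
    have "inj_on (map_prod f f) ?S"
      by (rule inj_on_subset[OF map_prod_inj_on[OF inj inj]]) (use that in auto)
    moreover have "map_prod f f ` ?S = {(x, y). x \<in> {f x1, f x2} \<and> y \<in> {f y1, f y2} \<and> E x y}"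
      using edges that by auto
    ultimately show ?thesis
      using card_image by fastforce
  qed
  have "finite (f ` A)"
    using cls unfolding in_class_S_def by blast
  then have "finite A"
    using finite_image_iff[OF inj] by blast
  moreover have simple: "simple_digraph_on A R"
    using cls edges unfolding in_class_S_def simple_digraph_on_def by auto
  moreover have "\<forall>x\<in>A. perp R x x"
    using simple unfolding simple_digraph_on_def perp_def by blast
  moreover have "\<forall>x\<in>A. \<forall>y\<in>A. perp R x y \<longrightarrow> perp R y x"
    unfolding perp_def by blast
  moreover have "\<forall>x\<in>A. \<forall>y\<in>A. \<forall>z\<in>A. perp R x y \<longrightarrow> perp R y z \<longrightarrow> perp R x z"
  proof (intro ballI impI)
    fix x y z
    assume in_A: "x \<in> A" "y \<in> A" "z \<in> A" and "perp R x y" "perp R y z"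
    then have "perp E (f x) (f y)" "perp E (f y) (f z)"
      by (simp_all add: perp_iff)
    with in_A have "perp E (f x) (f z)"
      using in_class_S_perp_trans[OF cls] by blast
    with in_A show "perp R x z"
      by (simp add: perp_iff)
  qed
  moreover have "\<forall>x1\<in>A. \<forall>x2\<in>A. \<forall>y1\<in>A. \<forall>y2\<in>A.
      x1 \<noteq> x2 \<longrightarrow> y1 \<noteq> y2 \<longrightarrow> perp R x1 x2 \<longrightarrow> perp R y1 y2 \<longrightarrow>
      even (card {(x, y). x \<in> {x1, x2} \<and> y \<in> {y1, y2} \<and> R x y})"
  proof (intro ballI impI)
    fix x1 x2 y1 y2
    assume in_A: "x1 \<in> A" "x2 \<in> A" "y1 \<in> A" "y2 \<in> A"
      and "x1 \<noteq> x2" "y1 \<noteq> y2" "perp R x1 x2" "perp R y1 y2"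
    then have "f x1 \<noteq> f x2" "f y1 \<noteq> f y2" "perp E (f x1) (f x2)" "perp E (f y1) (f y2)"
      using inj by (simp_all add: perp_iff inj_on_eq_iff)
    with in_A
    have "even (card {(x, y). x \<in> {f x1, f x2} \<and> y \<in> {f y1, f y2} \<and> E x y})"
      using in_class_S_parityD[OF cls] by blast
    with card_eq[OF in_A] show "even (card {(x, y). x \<in> {x1, x2} \<and> y \<in> {y1, y2} \<and> R x y})"
      by simp
  qed
  ultimately show ?thesis
    unfolding in_class_S_def by blast
qed

definition doubled :: "('a \<Rightarrow> 'a \<Rightarrow> bool) \<Rightarrow> 'a \<times> bool \<Rightarrow> 'a \<times> bool \<Rightarrow> bool" where
  "doubled E p q \<longleftrightarrow> (snd p = snd q \<and> E (fst p) (fst q)) \<or> (\<not> snd p \<and> snd q)"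

lemma perp_doubled: "perp (doubled E) p q \<longleftrightarrow> snd p = snd q \<and> perp E (fst p) (fst q)"
  unfolding perp_def doubled_def by auto

lemma in_class_S_doubled_copy:
  assumes "in_class_S B E"
  shows "in_class_S (B \<times> {i}) (doubled E)"
proof (rule in_class_S_pullback)
  show "inj_on fst (B \<times> {i})"
    by (auto intro: inj_onI)
  show "in_class_S (fst ` (B \<times> {i})) E"
    using assms by simp
qed (auto simp: doubled_def)

lemma in_class_S_doubled:
  assumes cls: "in_class_S B E"
  shows "in_class_S (B \<times> UNIV) (doubled E)"
proof -
  have simple: "simple_digraph_on B E" and "finite B"
    using cls unfolding in_class_S_def by blast+
  have "finite (B \<times> (UNIV :: bool set))"
    using \<open>finite B\<close> by simp
  moreover have simple_doubled: "simple_digraph_on (B \<times> UNIV) (doubled E)"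
    unfolding simple_digraph_on_def
  proof (intro conjI ballI)
    fix p q :: "'a \<times> bool" assume "p \<in> B \<times> UNIV" "q \<in> B \<times> UNIV"
    then have "fst p \<in> B" "fst q \<in> B"
      by auto
    with simple show "\<not> (doubled E p q \<and> doubled E q p)"
      unfolding simple_digraph_on_def doubled_def by blast
  next
    fix p :: "'a \<times> bool" assume "p \<in> B \<times> UNIV"
    then have "fst p \<in> B"
      by auto
    with simple show "\<not> doubled E p p"
      unfolding simple_digraph_on_def doubled_def by blast
  qed
  moreover have "\<forall>x\<in>B \<times> UNIV. perp (doubled E) x x"
    using simple_doubled unfolding simple_digraph_on_def perp_def by blast
  moreover have "\<forall>x\<in>B \<times> UNIV. \<forall>y\<in>B \<times> UNIV. perp (doubled E) x y \<longrightarrow> perp (doubled E) y x"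
    unfolding perp_def by blast
  moreover have "\<forall>x\<in>B \<times> UNIV. \<forall>y\<in>B \<times> UNIV. \<forall>z\<in>B \<times> UNIV.
      perp (doubled E) x y \<longrightarrow> perp (doubled E) y z \<longrightarrow> perp (doubled E) x z"
    unfolding perp_doubled using in_class_S_perp_trans[OF cls] by (metis mem_Times_iff)
  moreover have "\<forall>x1\<in>B \<times> UNIV. \<forall>x2\<in>B \<times> UNIV. \<forall>y1\<in>B \<times> UNIV. \<forall>y2\<in>B \<times> UNIV.
      x1 \<noteq> x2 \<longrightarrow> y1 \<noteq> y2 \<longrightarrow> perp (doubled E) x1 x2 \<longrightarrow> perp (doubled E) y1 y2 \<longrightarrow>
      even (card {(x, y). x \<in> {x1, x2} \<and> y \<in> {y1, y2} \<and> doubled E x y})"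
  proof (intro ballI impI)
    fix x1 x2 y1 y2
    assume in_B: "x1 \<in> B \<times> UNIV" "x2 \<in> B \<times> UNIV" "y1 \<in> B \<times> UNIV" "y2 \<in> B \<times> UNIV"
      and distinct: "x1 \<noteq> x2" "y1 \<noteq> y2"
      and px: "perp (doubled E) x1 x2" and py: "perp (doubled E) y1 y2"
    have same: "snd x2 = snd x1" "snd y2 = snd y1"
      using px py by (simp_all add: perp_doubled)
    show "even (card {(x, y). x \<in> {x1, x2} \<and> y \<in> {y1, y2} \<and> doubled E x y})"
    proof (cases "snd x1 = snd y1")
      case True
      then have "x1 \<in> B \<times> {snd x1}" "x2 \<in> B \<times> {snd x1}" "y1 \<in> B \<times> {snd x1}" "y2 \<in> B \<times> {snd x1}"
        using in_B same by (auto simp: mem_Times_iff)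
      with distinct px py show ?thesis
        by (intro in_class_S_parityD[OF in_class_S_doubled_copy[OF cls, of "snd x1"]])
    next
      case False
      with same have "{(x, y). x \<in> {x1, x2} \<and> y \<in> {y1, y2} \<and> doubled E x y}
          = (if snd x1 then {} else {x1, x2} \<times> {y1, y2})"
        unfolding doubled_def by auto
      with distinct show ?thesis
        by (simp add: card_cartesian_product)
    qed
  qed
  ultimately show ?thesis
    unfolding in_class_S_def by blast
qed

lemma age_is_S_embeds:
  assumes age: "age_is_S E" and cls: "in_class_S A R"
  obtains f where "inj_on f A" "\<And>x y. x \<in> A \<Longrightarrow> y \<in> A \<Longrightarrow> R x y \<longleftrightarrow> E (f x) (f y)"
proof -
  have "finite A"
    using cls unfolding in_class_S_def by blast
  then obtain e where e: "bij_betw e {..<card A} A"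
    using ex_bij_betw_nat_finite atLeast0LessThan by metis
  have "in_class_S {..<card A} (\<lambda>i j. R (e i) (e j))"
    using e cls by (intro in_class_S_pullback[where f = e and E = R]) (auto simp: bij_betw_def)
  then obtain f where f: "inj_on f {..<card A}"
    and f_edges: "\<forall>i<card A. \<forall>j<card A. R (e i) (e j) \<longleftrightarrow> E (f i) (f j)"
    using age unfolding age_is_S_def by blast
  let ?d = "inv_into {..<card A} e"
  have d: "bij_betw ?d A {..<card A}"
    using bij_betw_inv_into[OF e] .
  have e_d: "e (?d x) = x" if "x \<in> A" for x
    using bij_betw_inv_into_right[OF e that] .
  show thesis
  proof
    show "inj_on (f \<circ> ?d) A"
      using f d by (simp add: bij_betw_def comp_inj_on)
    show "R x y \<longleftrightarrow> E ((f \<circ> ?d) x) ((f \<circ> ?d) y)" if "x \<in> A" "y \<in> A" for x y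
    proof -
      have "?d x < card A" "?d y < card A"
        using bij_betwE[OF d] that by auto
      then show ?thesis
        using f_edges e_d[OF that(1)] e_d[OF that(2)] by force
    qed
  qed
qed

lemma homogeneous_extend:
  assumes hom: "homogeneous E" and "finite A" "inj_on f A"
    and "\<And>x y. x \<in> A \<Longrightarrow> y \<in> A \<Longrightarrow> E x y \<longleftrightarrow> E (f x) (f y)"
  shows "\<exists>g. is_aut E g \<and> (\<forall>x\<in>A. g x = f x)"
proof -
  have "bij_betw f A (f ` A)"
    using \<open>inj_on f A\<close> by (rule inj_on_imp_bij_betw)
  then show ?thesis
    using hom[unfolded homogeneous_def, rule_format, OF \<open>finite A\<close>] assms(4) by blast
qed

lemma is_aut_inv: "is_aut E g \<Longrightarrow> is_aut E (inv g)"
  unfolding is_aut_def by (metis bij_imp_bij_inv bij_inv_eq_iff)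

lemma is_aut_comp: "is_aut E g \<Longrightarrow> is_aut E f \<Longrightarrow> is_aut E (g \<circ> f)"
  unfolding is_aut_def by (auto intro: bij_comp)

lemma semigeneric_aut_above:
  assumes sg: "semigeneric E" and "finite B"
  obtains g where "is_aut E g" "\<And>b b'. b \<in> B \<Longrightarrow> b' \<in> B \<Longrightarrow> E b (g b')"
proof -
  have hom: "homogeneous E" and age: "age_is_S E"
    using sg unfolding semigeneric_def by auto
  have "in_class_S B E"
    using age \<open>finite B\<close> unfolding age_is_S_def by blast
  then obtain f where f: "inj_on f (B \<times> UNIV)"
    and f_edges: "\<And>p q. p \<in> B \<times> UNIV \<Longrightarrow> q \<in> B \<times> UNIV \<Longrightarrow> doubled E p q \<longleftrightarrow> E (f p) (f q)"
    using age_is_S_embeds[OF age in_class_S_doubled] by blast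
  have copy: "\<exists>g. is_aut E g \<and> (\<forall>b\<in>B. g b = f (b, i))" for i
  proof -
    have inj: "inj_on (\<lambda>b. f (b, i)) B"
      using f by (auto simp: inj_on_def)
    show ?thesis
    proof (rule homogeneous_extend[OF hom \<open>finite B\<close> inj])
      fix x y assume "x \<in> B" "y \<in> B"
      then show "E x y \<longleftrightarrow> E (f (x, i)) (f (y, i))"
        using f_edges[of "(x, i)" "(y, i)"] by (simp add: doubled_def)
    qed
  qed
  obtain g1 where g1: "is_aut E g1" "\<And>b. b \<in> B \<Longrightarrow> g1 b = f (b, False)"
    using copy by blast
  obtain g2 where g2: "is_aut E g2" "\<And>b. b \<in> B \<Longrightarrow> g2 b = f (b, True)"
    using copy by blast
  show thesis
  proof
    show "is_aut E (inv g1 \<circ> g2)"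
      using g1 g2 is_aut_comp is_aut_inv by blast
    fix b b' assume "b \<in> B" "b' \<in> B"
    then have "E (g1 b) (g2 b')"
      using f_edges[of "(b, False)" "(b', True)"] g1 g2 by (simp add: doubled_def)
    moreover have "g1 ((inv g1 \<circ> g2) b') = g2 b'"
      using g1 unfolding is_aut_def by (simp add: bij_is_surj surj_f_inv_f)
    ultimately show "E b ((inv g1 \<circ> g2) b')"
      using g1 unfolding is_aut_def by metis
  qed
qed

lemma columns_meeting_disjoint:
  assumes age: "\<And>A. finite A \<Longrightarrow> in_class_S A E"
    and edges: "\<And>b c. b \<in> B \<Longrightarrow> c \<in> C \<Longrightarrow> E b c"
  shows "columns_meeting E B \<inter> columns_meeting E C = {}"
proof (rule ccontr)
  assume "columns_meeting E B \<inter> columns_meeting E C \<noteq> {}"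
  then obtain x where "column E x \<inter> B \<noteq> {}" "column E x \<inter> C \<noteq> {}"
    unfolding columns_meeting_def columns_def by auto
  then obtain b c where "b \<in> B" "c \<in> C" "perp E x b" "perp E x c"
    unfolding column_def by auto
  moreover have "in_class_S {x, b, c} E"
    by (rule age) simp
  ultimately have "perp E b c"
    using in_class_S_perp_trans[of "{x, b, c}" E b x c] by (simp add: perp_def)
  with edges \<open>b \<in> B\<close> \<open>c \<in> C\<close> show False
    unfolding perp_def by blast
qed

theorem mainTheorem9:
  fixes E :: "'a \<Rightarrow> 'a \<Rightarrow> bool" and bs :: "'a list"
  assumes "semigeneric E"
  shows "\<exists>g. is_aut E g \<and>
           columns_meeting E (set bs) \<inter> columns_meeting E (g ` set bs) = {}"
proof -
  obtain g where "is_aut E g" and "\<And>b b'. b \<in> set bs \<Longrightarrow> b' \<in> set bs \<Longrightarrow> E b (g b')"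
    using semigeneric_aut_above[OF assms finite_set] by blast
  moreover have "\<And>A. finite A \<Longrightarrow> in_class_S A E"
    using assms unfolding semigeneric_def age_is_S_def by blast
  ultimately show ?thesis
    using columns_meeting_disjoint[where B = "set bs" and C = "g ` set bs"] by blast
qed

end
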